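(* Let $(V,\varphi,\xi,\eta,g)$, $\mathcal{F}$, $W_2$, $q_1,q_2$ be as in the context, and let $F\in W_2$ with associated operator $\mathcal{A}_\xi$. Then: (i) $F=q_1F$ if and only if $\mathcal{A}_\xi\circ\varphi=\varphi\circ\mathcal{A}_\xi$; (ii) $F=q_1F$ if and only if $F(X,Y,Z)=-F(\varphi X,\varphi Y,Z)-F(\varphi X,Y,\varphi Z)$ for all $X,Y,Z\in V$; (iii) $F=q_2F$ if and only if $\mathcal{A}_\xi\circ\varphi=-\varphi\circ\mathcal{A}_\xi$; (iv) $F=q_2F$ if and only if $F(X,Y,Z)=F(\varphi X,\varphi Y,Z)+F(\varphi X,Y,\varphi Z)$ for all $X,Y,Z\in V$.
   Context: Let $V$ be a real vector space of dimension $2n+1$ with an endomorphism $\varphi$, a vector $\xi$ and a linear form $\eta$ such that $\varphi\xi=0$, $\eta\circ\varphi=0$, $\eta(\xi)=1$, $\varphi^2=\mathrm{id}-\eta\otimes\xi$, and such that $\varphi$ restricted to $\mathbb{D}=\ker\eta$ has eigenvalues $\pm1$ with eigenspaces of equal dimension $n$. Let $g$ be a nondegenerate symmetric bilinear form on $V$ with $g(\varphi X,\varphi Y)=-g(X,Y)+\eta(X)\eta(Y)$; then $\eta(X)=g(X,\xi)$. Write $hX=X-\eta(X)\xi$. Fix a basis $\{e_1,\dots,e_{2n}\}$ of $\mathbb{D}$ and write $Y=Y^ie_i+\eta(Y)\xi$. Let $\mathcal{F}$ be the vector space of all $(0,3)$-tensors of the form $F(X,Y,Z)=Y^ig(\mathcal{A}_{e_i}X,Z)+\eta(Y)g(\mathcal{A}_\xi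 X,\varphi Z)$, where $\mathcal{A}_{e_i}:V\to V$ and $\mathcal{A}_\xi:V\to\mathbb{D}$ are linear maps satisfying for all $X$, $i,j$: $g(\mathcal{A}_{e_i}X,e_j)=-g(\mathcal{A}_{e_j}X,e_i)$; $\mathcal{A}_{\varphi e_i}X=-\varphi(\mathcal{A}_{e_i}X)-g(\mathcal{A}_\xi X,e_i)\xi$ (index extended linearly); $\eta(\mathcal{A}_{e_i}X)=-g(\mathcal{A}_\xi X,\varphi e_i)$; $\eta(\mathcal{A}_\xi X)=0$. These operators are determined by $F$ (e.g. $\mathcal{A}_\xi X\in\mathbb{D}$ is characterized by $g(\mathcal{A}_\xi X,\varphi Z)=F(X,\xi,Z)$ for all $Z$); $\mathcal{A}_\xi$ is called the operator associated with $F$. Let $p_2(F)(X,Y,Z)=-\eta(Y)F(hX,hZ,\xi)+\eta(Z)F(hX,hY,\xi)$ and $W_2=\{F\in\mathcal{F}:F=p_2F\}$; every $F\in W_2$ has the form $F(X,Y,Z)=-\eta(Y)g(\varphi(\mathcal{A}_\xi X),Z)+\eta(Z)g(\varphi(\mathcal{A}_\xi X),Y)$ with $\mathcal{A}_\xi\xi=0$. For $F\in W_2$ with associated operator $A=\mathcal{A}_\xi$, define $q_1(F)(X,Y,Z)=-\tfrac12\eta(Y)\{g(\varphi(AX),Z)+g(A(\varphi X),Z)\}+\tfrac12\eta(Z)\{g(\varphi(AX),Y)+g(A(\varphi X),Y)\}$, $q_2(F)(X,Y,Z)=-\tfrac12\eta(Y)\{g(\varphi(AX),Z)-g(A(\varphi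 X),Z)\}+\tfrac12\eta(Z)\{g(\varphi(AX),Y)-g(A(\varphi X),Y)\}$. *)

theory Defs
  imports "HOL-Analysis.Analysis"
begin

definition hproj :: "('v::real_vector \<Rightarrow> real) \<Rightarrow> 'v \<Rightarrow> 'v \<Rightarrow> 'v" where
  "hproj \<eta> \<xi> X = X - \<eta> X *\<^sub>R \<xi>"

definition para_structure ::
  "('v::euclidean_space \<Rightarrow> 'v) \<Rightarrow> 'v \<Rightarrow> ('v \<Rightarrow> real) \<Rightarrow> ('v \<Rightarrow> 'v \<Rightarrow> real) \<Rightarrow> nat \<Rightarrow> bool" where
  "para_structure \<phi> \<xi> \<eta> g n \<longleftrightarrow>
     DIM('v) = 2 * n + 1 \<and>
     linear \<phi> \<and> linear \<eta> \<and>
     \<phi> \<xi> = 0 \<and> (\<forall>X. \<eta> (\<phi> X) = 0) \<and> \<eta> \<xi> = 1 \<and>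
     (\<forall>X. \<phi> (\<phi> X) = X - \<eta> X *\<^sub>R \<xi>) \<and>
     dim {X. \<eta> X = 0 \<and> \<phi> X = X} = n \<and>
     dim {X. \<eta> X = 0 \<and> \<phi> X = - X} = n \<and>
     bilinear g \<and> (\<forall>X Y. g X Y = g Y X) \<and>
     (\<forall>X. (\<forall>Y. g X Y = 0) \<longrightarrow> X = 0) \<and>
     (\<forall>X Y. g (\<phi> X) (\<phi> Y) = - g X Y + \<eta> X * \<eta> Y)"

text \<open>The space F. The family of operators A_{e_i} is encoded as a bilinear map
  B with B U X = A_U X for U in D (A_U = U^i A_{e_i}, index extended linearly).\<close>
definition in_F ::
  "('v::euclidean_space \<Rightarrow> 'v) \<Rightarrow> 'v \<Rightarrow> ('v \<Rightarrow> real) \<Rightarrow> ('v \<Rightarrow> 'v \<Rightarrow> real)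
   \<Rightarrow> ('v \<Rightarrow> 'v \<Rightarrow> 'v \<Rightarrow> real) \<Rightarrow> bool" where
  "in_F \<phi> \<xi> \<eta> g F \<longleftrightarrow>
     (\<exists>B A. bilinear B \<and> linear A \<and>
        (\<forall>X. \<eta> (A X) = 0) \<and>
        (\<forall>U W X. \<eta> U = 0 \<longrightarrow> \<eta> W = 0 \<longrightarrow> g (B U X) W = - g (B W X) U) \<and>
        (\<forall>U X. \<eta> U = 0 \<longrightarrow> B (\<phi> U) X = - \<phi> (B U X) - g (A X) U *\<^sub>R \<xi>) \<and>
        (\<forall>U X. \<eta> U = 0 \<longrightarrow> \<eta> (B U X) = - g (A X) (\<phi> U)) \<and>
        (\<forall>X Y Z. F X Y Z = g (B (hproj \<eta> \<xi> Y) X) Z + \<eta> Y * g (A X) (\<phi> Z)))"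

definition p2 ::
  "'v::real_vector \<Rightarrow> ('v \<Rightarrow> real) \<Rightarrow> ('v \<Rightarrow> 'v \<Rightarrow> 'v \<Rightarrow> real) \<Rightarrow> ('v \<Rightarrow> 'v \<Rightarrow> 'v \<Rightarrow> real)" where
  "p2 \<xi> \<eta> F = (\<lambda>X Y Z. - \<eta> Y * F (hproj \<eta> \<xi> X) (hproj \<eta> \<xi> Z) \<xi>
                         + \<eta> Z * F (hproj \<eta> \<xi> X) (hproj \<eta> \<xi> Y) \<xi>)"

definition in_W2 ::
  "('v::euclidean_space \<Rightarrow> 'v) \<Rightarrow> 'v \<Rightarrow> ('v \<Rightarrow> real) \<Rightarrow> ('v \<Rightarrow> 'v \<Rightarrow> real)
   \<Rightarrow> ('v \<Rightarrow> 'v \<Rightarrow> 'v \<Rightarrow> real) \<Rightarrow> bool" where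
  "in_W2 \<phi> \<xi> \<eta> g F \<longleftrightarrow> in_F \<phi> \<xi> \<eta> g F \<and> F = p2 \<xi> \<eta> F"

definition q1 ::
  "('v \<Rightarrow> 'v) \<Rightarrow> ('v \<Rightarrow> real) \<Rightarrow> ('v \<Rightarrow> 'v \<Rightarrow> real) \<Rightarrow> ('v \<Rightarrow> 'v)
   \<Rightarrow> ('v \<Rightarrow> 'v \<Rightarrow> 'v \<Rightarrow> real)" where
  "q1 \<phi> \<eta> g A = (\<lambda>X Y Z.
      - (1/2) * \<eta> Y * (g (\<phi> (A X)) Z + g (A (\<phi> X)) Z)
      + (1/2) * \<eta> Z * (g (\<phi> (A X)) Y + g (A (\<phi> X)) Y))"

definition q2 ::
  "('v \<Rightarrow> 'v) \<Rightarrow> ('v \<Rightarrow> real) \<Rightarrow> ('v \<Rightarrow> 'v \<Rightarrow> real) \<Rightarrow> ('v \<Rightarrow> 'v)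
   \<Rightarrow> ('v \<Rightarrow> 'v \<Rightarrow> 'v \<Rightarrow> real)" where
  "q2 \<phi> \<eta> g A = (\<lambda>X Y Z.
      - (1/2) * \<eta> Y * (g (\<phi> (A X)) Z - g (A (\<phi> X)) Z)
      + (1/2) * \<eta> Z * (g (\<phi> (A X)) Y - g (A (\<phi> X)) Y))"

end

theory Submission
  imports Defs
begin

text \<open>Every \<open>F \<in> W\<^sub>2\<close> is the tensor \<open>\<eta>(Z) g(\<phi>(AX),Y) - \<eta>(Y) g(\<phi>(AX),Z)\<close> built from
  the map \<open>\<phi> \<circ> A\<close>. The tensors \<open>q\<^sub>1F\<close>, \<open>q\<^sub>2F\<close> and the \<open>\<phi>\<close>-transformed tensors in (ii)
  and (iv) arise from the same construction applied to \<open>(\<phi>A \<plusminus> A\<phi>)/2\<close> and \<open>\<plusminus>A\<phi>\<close>.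
  Since the construction is injective on \<open>ker \<eta>\<close>-valued maps (putting \<open>Y = \<xi>\<close> recovers
  \<open>g(CX,\<cdot>)\<close>, and \<open>g\<close> is nondegenerate), each equality of tensors becomes an equality
  of maps.\<close>

lemma eq_half_sum_iff:
  fixes u v :: "'a::real_vector"
  shows "u = (1/2) *\<^sub>R (u + v) \<longleftrightarrow> v = u"
proof
  assume "u = (1/2) *\<^sub>R (u + v)"
  then have "2 *\<^sub>R u = u + v"
    by (metis (no_types) scaleR_scaleR nonzero_mult_div_cancel_left
        div_by_1 scaleR_one zero_neq_numeral times_divide_eq_right)
  then show "v = u"
    by (simp add: scaleR_2)
qed simp

lemma eq_half_diff_iff:
  fixes u v :: "'a::real_vector"
  shows "u = (1/2) *\<^sub>R (u - v) \<longleftrightarrow> v = - u"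
  using eq_half_sum_iff[of u "- v"] by (auto simp: minus_equation_iff)

definition eta_wedge ::
  "('v \<Rightarrow> real) \<Rightarrow> ('v \<Rightarrow> 'v \<Rightarrow> real) \<Rightarrow> ('v \<Rightarrow> 'v) \<Rightarrow> ('v \<Rightarrow> 'v \<Rightarrow> 'v \<Rightarrow> real)" where
  "eta_wedge \<eta> g C = (\<lambda>X Y Z. - \<eta> Y * g (C X) Z + \<eta> Z * g (C X) Y)"

locale almost_paracontact_metric =
  fixes \<phi> :: "'v::euclidean_space \<Rightarrow> 'v" and \<xi> :: 'v and \<eta> :: "'v \<Rightarrow> real"
    and g :: "'v \<Rightarrow> 'v \<Rightarrow> real"
  assumes phi_linear: "linear \<phi>" and eta_linear: "linear \<eta>"
    and phi_xi: "\<phi> \<xi> = 0" and eta_phi: "\<And>X. \<eta> (\<phi> X) = 0" and eta_xi: "\<eta> \<xi> = 1"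
    and phi_phi: "\<And>X. \<phi> (\<phi> X) = X - \<eta> X *\<^sub>R \<xi>"
    and g_bilinear: "bilinear g"
    and g_nondegenerate: "\<And>X. (\<forall>Y. g X Y = 0) \<Longrightarrow> X = 0"
    and g_phi_phi: "\<And>X Y. g (\<phi> X) (\<phi> Y) = - g X Y + \<eta> X * \<eta> Y"

lemma para_structure_imp_almost_paracontact_metric:
  "para_structure \<phi> \<xi> \<eta> g n \<Longrightarrow> almost_paracontact_metric \<phi> \<xi> \<eta> g"
  unfolding para_structure_def almost_paracontact_metric_def by auto

context almost_paracontact_metric
begin

lemma g_linear_left: "linear (\<lambda>X. g X Y)"
  using g_bilinear unfolding bilinear_def by auto

lemma g_linear_right: "linear (\<lambda>Y. g X Y)"
  using g_bilinear unfolding bilinear_def by auto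

lemmas g_left_simps = linear_0[OF g_linear_left] linear_add[OF g_linear_left]
  linear_diff[OF g_linear_left] linear_scale[OF g_linear_left] linear_neg[OF g_linear_left]

lemmas g_right_simps = linear_0[OF g_linear_right] linear_add[OF g_linear_right]
  linear_diff[OF g_linear_right] linear_scale[OF g_linear_right]

lemma g_xi: "g X \<xi> = \<eta> X"
  using g_phi_phi[of X \<xi>] by (simp add: phi_xi eta_xi g_right_simps)

lemma g_phi_skew: "g U (\<phi> Z) = - g (\<phi> U) Z"
proof -
  have "g (\<phi> U) (\<phi> (\<phi> Z)) = - g U (\<phi> Z)"
    by (simp add: g_phi_phi eta_phi)
  moreover have "g (\<phi> U) (\<phi> (\<phi> Z)) = g (\<phi> U) Z"
    by (simp add: phi_phi g_right_simps g_xi eta_phi)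
  ultimately show ?thesis by simp
qed

lemma eq_0_if_orthogonal_phi:
  assumes "\<eta> U = 0" and "\<And>Z. g U (\<phi> Z) = 0"
  shows "U = 0"
proof (rule g_nondegenerate, intro allI)
  fix Y
  have "g U Y = g U (\<phi> (\<phi> Y) + \<eta> Y *\<^sub>R \<xi>)"
    by (simp add: phi_phi)
  also have "\<dots> = g U (\<phi> (\<phi> Y)) + \<eta> Y * g U \<xi>"
    by (simp add: g_right_simps)
  also have "\<dots> = 0"
    using assms by (simp add: g_xi)
  finally show "g U Y = 0" .
qed

lemma eta_wedge_inject:
  assumes "\<And>X. \<eta> (C X) = 0" and "\<And>X. \<eta> (C' X) = 0"
  shows "eta_wedge \<eta> g C = eta_wedge \<eta> g C' \<longleftrightarrow> C = C'"
proof
  assume eq: "eta_wedge \<eta> g C = eta_wedge \<eta> g C'"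
  show "C = C'"
  proof
    fix X
    have "g (C X - C' X) Z = 0" for Z
      using fun_cong[OF fun_cong[OF fun_cong[OF eq, of X], of \<xi>], of Z] assms
      by (simp add: eta_wedge_def eta_xi g_xi g_left_simps)
    then have "C X - C' X = 0"
      using g_nondegenerate by blast
    then show "C X = C' X"
      by simp
  qed
qed simp

lemma eta_wedge_uminus:
  "eta_wedge \<eta> g (\<lambda>X. - C X) = (\<lambda>X Y Z. - eta_wedge \<eta> g C X Y Z)"
  by (simp add: eta_wedge_def fun_eq_iff g_left_simps)

lemma eta_wedge_phi_shift:
  assumes "\<And>X. \<eta> (C X) = 0"
  shows "eta_wedge \<eta> g (\<lambda>X. \<phi> (C X)) (\<phi> X) (\<phi> Y) Z
           + eta_wedge \<eta> g (\<lambda>X. \<phi> (C X)) (\<phi> X) Y (\<phi> Z)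
         = - eta_wedge \<eta> g (\<lambda>X. C (\<phi> X)) X Y Z"
  using assms by (simp add: eta_wedge_def eta_phi g_phi_phi algebra_simps)

lemma q1_eq_eta_wedge:
  "q1 \<phi> \<eta> g A = eta_wedge \<eta> g (\<lambda>X. (1/2) *\<^sub>R (\<phi> (A X) + A (\<phi> X)))"
  by (simp add: q1_def eta_wedge_def fun_eq_iff g_left_simps algebra_simps)

lemma q2_eq_eta_wedge:
  "q2 \<phi> \<eta> g A = eta_wedge \<eta> g (\<lambda>X. (1/2) *\<^sub>R (\<phi> (A X) - A (\<phi> X)))"
  by (simp add: q2_def eta_wedge_def fun_eq_iff g_left_simps algebra_simps)

lemma hproj_xi: "hproj \<eta> \<xi> \<xi> = 0"
  by (simp add: hproj_def eta_xi)

lemma eta_hproj: "\<eta> (hproj \<eta> \<xi> Y) = 0"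
  by (simp add: hproj_def linear_diff[OF eta_linear] linear_scale[OF eta_linear] eta_xi)

lemma phi_hproj: "\<phi> (hproj \<eta> \<xi> Y) = \<phi> Y"
  by (simp add: hproj_def linear_diff[OF phi_linear] linear_scale[OF phi_linear] phi_xi)

lemma in_F_swap_xi:
  assumes "in_F \<phi> \<xi> \<eta> g F"
  shows "F X Y \<xi> = - F X \<xi> Y"
proof -
  obtain B A where "bilinear B"
    and B_eta: "\<And>U X. \<eta> U = 0 \<Longrightarrow> \<eta> (B U X) = - g (A X) (\<phi> U)"
    and F_def: "\<And>X Y Z. F X Y Z = g (B (hproj \<eta> \<xi> Y) X) Z + \<eta> Y * g (A X) (\<phi> Z)"
    using assms unfolding in_F_def by blast
  then have "B 0 X = 0"
    unfolding bilinear_def using linear_0 by blast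
  then show ?thesis
    by (simp add: F_def B_eta g_xi eta_hproj phi_hproj phi_xi hproj_xi eta_xi
        g_left_simps g_right_simps)
qed

lemma in_W2_eq_eta_wedge:
  assumes W2: "in_W2 \<phi> \<xi> \<eta> g F" and "linear A"
    and A_eta: "\<And>X. \<eta> (A X) = 0" and A_F: "\<And>X Z. g (A X) (\<phi> Z) = F X \<xi> Z"
  shows "F = eta_wedge \<eta> g (\<lambda>X. \<phi> (A X))"
proof -
  have F_p2: "F = p2 \<xi> \<eta> F" and F_swap: "\<And>X Y. F X Y \<xi> = - g (A X) (\<phi> Y)"
    using W2 in_F_swap_xi A_F unfolding in_W2_def by auto
  have "A \<xi> = 0"
  proof (rule eq_0_if_orthogonal_phi)
    fix Z
    have "F \<xi> \<xi> Z = 0"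
      by (subst F_p2) (simp add: p2_def hproj_xi F_swap linear_0[OF \<open>linear A\<close>] g_left_simps)
    then show "g (A \<xi>) (\<phi> Z) = 0"
      by (simp add: A_F)
  qed (rule A_eta)
  then have A_hproj: "A (hproj \<eta> \<xi> X) = A X" for X
    by (simp add: hproj_def linear_diff[OF \<open>linear A\<close>] linear_scale[OF \<open>linear A\<close>])
  show ?thesis
    by (subst F_p2) (simp add: p2_def eta_wedge_def fun_eq_iff F_swap A_hproj phi_hproj g_phi_skew)
qed

end

theorem proposition4p2:
  fixes \<phi> :: "'v::euclidean_space \<Rightarrow> 'v" and \<xi> :: 'v and \<eta> :: "'v \<Rightarrow> real"
    and g :: "'v \<Rightarrow> 'v \<Rightarrow> real" and n :: nat
    and F :: "'v \<Rightarrow> 'v \<Rightarrow> 'v \<Rightarrow> real" and A :: "'v \<Rightarrow> 'v"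
  assumes str: "para_structure \<phi> \<xi> \<eta> g n"
    and W2: "in_W2 \<phi> \<xi> \<eta> g F"
    and A_lin: "linear A"
    and A_D: "\<forall>X. \<eta> (A X) = 0"
    and A_F: "\<forall>X Z. g (A X) (\<phi> Z) = F X \<xi> Z"
  shows "(F = q1 \<phi> \<eta> g A \<longleftrightarrow> (\<forall>X. A (\<phi> X) = \<phi> (A X)))
       \<and> (F = q1 \<phi> \<eta> g A \<longleftrightarrow>
            (\<forall>X Y Z. F X Y Z = - F (\<phi> X) (\<phi> Y) Z - F (\<phi> X) Y (\<phi> Z)))
       \<and> (F = q2 \<phi> \<eta> g A \<longleftrightarrow> (\<forall>X. A (\<phi> X) = - \<phi> (A X)))
       \<and> (F = q2 \<phi> \<eta> g A \<longleftrightarrow>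
            (\<forall>X Y Z. F X Y Z = F (\<phi> X) (\<phi> Y) Z + F (\<phi> X) Y (\<phi> Z)))"
proof -
  interpret almost_paracontact_metric \<phi> \<xi> \<eta> g
    using str by (rule para_structure_imp_almost_paracontact_metric)
  let ?W = "eta_wedge \<eta> g"
  have F: "F = ?W (\<lambda>X. \<phi> (A X))"
    using in_W2_eq_eta_wedge W2 A_lin A_D A_F by blast
  have eta_0: "\<eta> (\<phi> (A X)) = 0" "\<eta> (A (\<phi> X)) = 0"
    "\<eta> ((1/2) *\<^sub>R (\<phi> (A X) + A (\<phi> X))) = 0" "\<eta> ((1/2) *\<^sub>R (\<phi> (A X) - A (\<phi> X))) = 0"
    "\<eta> (- A (\<phi> X)) = 0" for X
    using A_D by (simp_all add: eta_phi linear_add[OF eta_linear] linear_diff[OF eta_linear]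
        linear_scale[OF eta_linear] linear_neg[OF eta_linear])
  have F_eq_iff: "F = ?W C \<longleftrightarrow> (\<forall>X. \<phi> (A X) = C X)" if "\<And>X. \<eta> (C X) = 0" for C
  proof -
    have "F = ?W C \<longleftrightarrow> (\<lambda>X. \<phi> (A X)) = C"
      unfolding F by (rule eta_wedge_inject[OF eta_0(1) that])
    then show ?thesis
      by (simp add: fun_eq_iff)
  qed
  have shifted: "F (\<phi> X) (\<phi> Y) Z + F (\<phi> X) Y (\<phi> Z) = - ?W (\<lambda>X. A (\<phi> X)) X Y Z"
    for X Y Z
    unfolding F by (rule eta_wedge_phi_shift) (simp add: A_D)
  then have shifted': "- F (\<phi> X) (\<phi> Y) Z - F (\<phi> X) Y (\<phi> Z) = ?W (\<lambda>X. A (\<phi> X)) X Y Z"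
    for X Y Z
    using shifted[of X Y Z] by linarith
  have "F = q1 \<phi> \<eta> g A \<longleftrightarrow> (\<forall>X. A (\<phi> X) = \<phi> (A X))"
    unfolding q1_eq_eta_wedge F_eq_iff[OF eta_0(3)] eq_half_sum_iff ..
  moreover have "(\<forall>X Y Z. F X Y Z = - F (\<phi> X) (\<phi> Y) Z - F (\<phi> X) Y (\<phi> Z))
                 \<longleftrightarrow> (\<forall>X. A (\<phi> X) = \<phi> (A X))"
    using F_eq_iff[OF eta_0(2)] by (auto simp: shifted' fun_eq_iff)
  moreover have "F = q2 \<phi> \<eta> g A \<longleftrightarrow> (\<forall>X. A (\<phi> X) = - \<phi> (A X))"
    unfolding q2_eq_eta_wedge F_eq_iff[OF eta_0(4)] eq_half_diff_iff ..
  moreover have "(\<forall>X Y Z. F X Y Z = F (\<phi> X) (\<phi> Y) Z + F (\<phi> X) Y (\<phi> Z))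
                 \<longleftrightarrow> (\<forall>X. A (\<phi> X) = - \<phi> (A X))"
    using F_eq_iff[OF eta_0(5)] by (auto simp: shifted eta_wedge_uminus fun_eq_iff)
  ultimately show ?thesis
    by blast
qed

end
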